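(* Let $m=2k+1$ with $k$ a nonnegative integer and let $n$ be an integer with $0\le n<m-1$. Let $M(u)=M(u^2+u^{2m})$, $u\in(0,+\infty)$, where $M(h)$ is the first order Melnikov function of $(1.1)_\epsilon$. Then $M(u)$ is a linear combination of the following $\left[\frac{n-1}{2}\right]+\left[\frac{n}{2}\right]^2+3\left[\frac{n}{2}\right]+3$ linearly independent functions on $(0,+\infty)$: $$u^{2p+1}\ (0\le p\le [n/2]);\qquad u^{2p+(m-1)(k+1)+1}\ (0\le p\le [n/2],\ 0\le k\le 2p);\qquad (u^2+u^{2m})^{l+1}\ (0\le l\le [(n-1)/2]),$$ (i.e. $u,u^3,\dots,u^{2[n/2]+1},u^{m},u^{m+2},u^{2m+1},\dots,u^{2[n/2]m+m},u^2+u^{2m},\dots,(u^2+u^{2m})^{[(n-1)/2]+1}$), and the coefficients of this linear combination are independent, i.e. as the coefficients of $p^\pm,q^\pm$ range over all real values these coefficients take all real values.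
   Context: $[x]$ is the integer part. System $(1.1)_\epsilon$: $\dot x=y+\epsilon p^{+},\ \dot y=-x+\epsilon q^{+}$ for $y\ge x^{m}$, and $\dot x=y+\epsilon p^{-},\ \dot y=-x+\epsilon q^{-}$ for $y<x^{m}$, where $p^{\pm}=\sum_{i+j=0}^{n}a^{\pm}_{i,j}x^iy^j$, $q^{\pm}=\sum_{i+j=0}^{n}b^{\pm}_{i,j}x^iy^j$ are arbitrary real polynomials of degree $n$. For $h>0$, $u=u(h)>0$ solves $u^2+u^{2m}=h$; $L_h^{+}$ is the arc of $x^2+y^2=h$ in $\{y\ge x^m\}$ traversed clockwise from $(-u,(-u)^m)$ to $(u,u^m)$, and $L_h^-$ the arc in $\{y\le x^m\}$ traversed clockwise from $(u,u^m)$ to $(-u,(-u)^m)$. The first order Melnikov function is $M(h)=\int_{L_h^+}q^+dx-p^+dy+\int_{L_h^-}q^-dx-p^-dy$. *)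

theory Defs
  imports "HOL-Analysis.Analysis"
begin

definition poly2 :: "nat \<Rightarrow> (nat \<Rightarrow> nat \<Rightarrow> real) \<Rightarrow> real \<Rightarrow> real \<Rightarrow> real" where
  "poly2 n a x y = (\<Sum>i\<le>n. \<Sum>j\<le>n - i. a i j * x ^ i * y ^ j)"

definition line_int :: "(real \<Rightarrow> real \<Rightarrow> real) \<Rightarrow> (real \<Rightarrow> real \<Rightarrow> real)
    \<Rightarrow> (real \<Rightarrow> real \<times> real) \<Rightarrow> real \<Rightarrow> real \<Rightarrow> real" where
  "line_int Q P g s t = integral {s..t} (\<lambda>\<tau>.
      Q (fst (g \<tau>)) (snd (g \<tau>)) * fst (vector_derivative g (at \<tau>))
    - P (fst (g \<tau>)) (snd (g \<tau>)) * snd (vector_derivative g (at \<tau>)))"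

definition u_of :: "nat \<Rightarrow> real \<Rightarrow> real" where
  "u_of m h = (THE u. u > 0 \<and> u ^ 2 + u ^ (2 * m) = h)"

text \<open>Clockwise parametrisation of the circle x^2 + y^2 = h: theta = 0 at the top.\<close>
definition circ :: "real \<Rightarrow> real \<Rightarrow> real \<times> real" where
  "circ h \<theta> = (sqrt h * sin \<theta>, sqrt h * cos \<theta>)"

text \<open>Angle of the point (u, u^m) (first quadrant) in this parametrisation.\<close>
definition theta0 :: "nat \<Rightarrow> real \<Rightarrow> real" where
  "theta0 m h = arctan (u_of m h / u_of m h ^ m)"

text \<open>First order Melnikov function M(h): L_h^+ is circ h on [theta0 - pi, theta0]
  (from (-u,(-u)^m) clockwise to (u,u^m)), L_h^- is circ h on [theta0, theta0 + pi].
  ap, bp are the coefficients of p^+, q^+; am, bm those of p^-, q^-.\<close>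
definition melnikov :: "nat \<Rightarrow> nat \<Rightarrow> (nat \<Rightarrow> nat \<Rightarrow> real) \<Rightarrow> (nat \<Rightarrow> nat \<Rightarrow> real)
    \<Rightarrow> (nat \<Rightarrow> nat \<Rightarrow> real) \<Rightarrow> (nat \<Rightarrow> nat \<Rightarrow> real) \<Rightarrow> real \<Rightarrow> real" where
  "melnikov m n ap bp am bm h =
     line_int (poly2 n bp) (poly2 n ap) (circ h) (theta0 m h - pi) (theta0 m h)
   + line_int (poly2 n bm) (poly2 n am) (circ h) (theta0 m h) (theta0 m h + pi)"

definition Lset :: "nat \<Rightarrow> nat set" where
  "Lset n = {l. int l \<le> \<lfloor>(real n - 1) / 2\<rfloor>}"

definition comb :: "nat \<Rightarrow> nat \<Rightarrow> (nat \<Rightarrow> real) \<Rightarrow> (nat \<Rightarrow> nat \<Rightarrow> real) \<Rightarrow> (nat \<Rightarrow> real)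
    \<Rightarrow> real \<Rightarrow> real" where
  "comb m n cA cB cC u =
     (\<Sum>p\<le>n div 2. cA p * u ^ (2 * p + 1))
   + (\<Sum>p\<le>n div 2. \<Sum>k\<le>2 * p. cB p k * u ^ (2 * p + (m - 1) * (k + 1) + 1))
   + (\<Sum>l\<in>Lset n. cC l * (u ^ 2 + u ^ (2 * m)) ^ (l + 1))"

end

theory Submission
  imports Defs "HOL-Computational_Algebra.Polynomial"
begin

text \<open>On the circle x^2 + y^2 = h the forms x^i y^j dx and x^i y^j dy contribute sqrt h^(a+b)
  times an integral of sin^a cos^b over a half turn ending or starting at the angle theta0 of the
  switching point (u, u^m). By the reduction formulas such a half-turn integral is +-2 F(theta0),
  with F a homogeneous trigonometric polynomial of degree a + b, when a + b is odd, and a constant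
  multiple of pi when a + b is even. Since sqrt h sin theta0 = u and sqrt h cos theta0 = u^m, the odd
  degrees give the monomials u^(i + m j) with i + j odd, which are exactly the listed odd powers of u,
  and the even degrees give the powers of h. Conversely every listed function is a Melnikov function:
  an odd monomial comes from the exact form d(x^a y^b)/2 on the upper arc, a power h^(l+1) from
  p^+ = p^- = x^(2l+1). For independence, a combination is P(u) + G(u^2 + u^(2m)) with P an odd
  polynomial (m is odd), so vanishing for u > 0 forces P = 0 and G = 0; the exponents of P are
  distinct because they are (2p - k) + m (k + 1) with 2p - k < m.\<close>

section \<open>Homogeneous trigonometric polynomials and half-turn integrals\<close>

inductive_set trig_hom :: "nat \<Rightarrow> (real \<Rightarrow> real) set" for d :: nat where
  zero: "(\<lambda>x. 0) \<in> trig_hom d"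
| monom: "i + j = d \<Longrightarrow> (\<lambda>x. sin x ^ i * cos x ^ j) \<in> trig_hom d"
| add: "f \<in> trig_hom d \<Longrightarrow> g \<in> trig_hom d \<Longrightarrow> (\<lambda>x. f x + g x) \<in> trig_hom d"
| scale: "f \<in> trig_hom d \<Longrightarrow> (\<lambda>x. c * f x) \<in> trig_hom d"

lemma trig_hom_diff:
  "f \<in> trig_hom d \<Longrightarrow> g \<in> trig_hom d \<Longrightarrow> (\<lambda>x. f x - g x) \<in> trig_hom d"
  using trig_hom.add[of f d "\<lambda>x. -1 * g x"] trig_hom.scale[of g d "-1"] by simp

lemma trig_hom_divide: "f \<in> trig_hom d \<Longrightarrow> (\<lambda>x. f x / c) \<in> trig_hom d"
  using trig_hom.scale[of f d "inverse c"] by (simp add: divide_inverse mult.commute)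

lemma trig_hom_shift_pi:
  assumes "f \<in> trig_hom d"
  shows "f (x + pi) = (-1) ^ d * f x" "f (x - pi) = (-1) ^ d * f x"
  using assms
proof induction
  case (monom i j)
  have "(- sin x) ^ i * (- cos x) ^ j = (-1) ^ (i + j) * (sin x ^ i * cos x ^ j)"
    by (simp only: power_minus[of "sin x"] power_minus[of "cos x"] power_add mult_ac)
  then show "sin (x + pi) ^ i * cos (x + pi) ^ j = (-1) ^ d * (sin x ^ i * cos x ^ j)"
    and "sin (x - pi) ^ i * cos (x - pi) ^ j = (-1) ^ d * (sin x ^ i * cos x ^ j)"
    using monom by simp_all
qed (simp_all add: distrib_left)

lemma trig_hom_degree_add2:
  assumes "f \<in> trig_hom d"
  shows "f \<in> trig_hom (d + 2)"
  using assms
proof induction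
  case (monom i j)
  have "s ^ i * c ^ j * (s\<^sup>2 + c\<^sup>2) = s ^ (i + 2) * c ^ j + s ^ i * c ^ (j + 2)" for s c :: real
    by (simp add: power_add power2_eq_square algebra_simps)
  from this[of "sin x" "cos x" for x]
  have "sin x ^ i * cos x ^ j = sin x ^ (i + 2) * cos x ^ j + sin x ^ i * cos x ^ (j + 2)" for x :: real
    unfolding sin_cos_squared_add mult_1_right .
  then show ?case
    using monom by (simp only:) (intro trig_hom.add trig_hom.monom; simp)
qed (simp_all add: trig_hom.intros)

text \<open>The constant c is the mean value of sin^a cos^b; its positivity for even a and b is what
  makes the powers of h reachable by Melnikov functions.\<close>

definition sin_cos_antideriv :: "nat \<Rightarrow> nat \<Rightarrow> (real \<Rightarrow> real) \<Rightarrow> real \<Rightarrow> bool" where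
  "sin_cos_antideriv a b F c \<longleftrightarrow> F \<in> trig_hom (a + b) \<and>
     (\<forall>x. (F has_real_derivative sin x ^ a * cos x ^ b - c) (at x)) \<and>
     (odd (a + b) \<longrightarrow> c = 0) \<and> (even a \<and> even b \<longrightarrow> c > 0)"

lemma sin_power_add2_cos_power:
  "sin (x::real) ^ (a + 2) * cos x ^ b = sin x ^ a * cos x ^ b - sin x ^ a * cos x ^ (b + 2)"
proof -
  have "s ^ a * (1 - c\<^sup>2) * c ^ b = s ^ a * c ^ b - s ^ a * c ^ (b + 2)" for s c :: real
    by (simp add: power_add power2_eq_square algebra_simps)
  moreover have "sin x ^ (a + 2) = sin x ^ a * (1 - (cos x)\<^sup>2)"
    by (simp only: power_add sin_squared_eq)
  ultimately show ?thesis
    by (simp only:)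
qed

lemma has_real_derivative_sin_cos_power:
  "((\<lambda>x. sin x ^ (a + 1) * cos x ^ (b + 1)) has_real_derivative
     real (a + b + 2) * (sin x ^ a * cos x ^ (b + 2)) - real (b + 1) * (sin x ^ a * cos x ^ b)) (at x)"
proof -
  have "((\<lambda>x. sin x ^ (a + 1) * cos x ^ (b + 1)) has_real_derivative
      real (a + 1) * (sin x ^ a * cos x ^ (b + 2)) - real (b + 1) * (sin x ^ (a + 2) * cos x ^ b)) (at x)"
    by (rule derivative_eq_intros refl)+ (simp add: power_add algebra_simps)
  moreover have "real (a + 1) * q - real (b + 1) * (p - q) = real (a + b + 2) * q - real (b + 1) * p"
    for p q :: real
    by (simp add: algebra_simps)
  ultimately show ?thesis
    unfolding sin_power_add2_cos_power by (simp only:)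
qed

lemma sin_cos_antideriv_add2_right:
  assumes "sin_cos_antideriv a b F c"
  shows "sin_cos_antideriv a (b + 2)
           (\<lambda>x. (sin x ^ (a + 1) * cos x ^ (b + 1) + real (b + 1) * F x) / real (a + b + 2))
           (real (b + 1) * c / real (a + b + 2))"
proof -
  define P where "P x = sin x ^ a * cos x ^ b" for x :: real
  define Q where "Q x = sin x ^ a * cos x ^ (b + 2)" for x :: real
  have F: "F \<in> trig_hom (a + b + 2)" and
    dF: "\<And>x. (F has_real_derivative P x - c) (at x)"
    using assms trig_hom_degree_add2 by (auto simp: sin_cos_antideriv_def P_def)
  have "((\<lambda>x. (sin x ^ (a + 1) * cos x ^ (b + 1) + real (b + 1) * F x) / real (a + b + 2))
      has_real_derivative (real (a + b + 2) * Q x - real (b + 1) * P x + real (b + 1) * (P x - c))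
        / real (a + b + 2)) (at x)" for x
    using has_real_derivative_sin_cos_power[of a b x] unfolding P_def[symmetric] Q_def[symmetric]
    by (intro DERIV_cdivide DERIV_add DERIV_cmult dF)
  moreover have "(real (a + b + 2) * Q x - real (b + 1) * P x + real (b + 1) * (P x - c))
        / real (a + b + 2) = Q x - real (b + 1) * c / real (a + b + 2)" for x
    by (simp add: field_simps)
  moreover have "(\<lambda>x. (sin x ^ (a + 1) * cos x ^ (b + 1) + real (b + 1) * F x) / real (a + b + 2))
      \<in> trig_hom (a + (b + 2))"
    using F trig_hom.monom[of "a + 1" "b + 1"]
    by (auto intro!: trig_hom_divide trig_hom.add trig_hom.scale)
  ultimately show ?thesis
    using assms by (auto simp: sin_cos_antideriv_def Q_def)
qed

lemma sin_cos_antideriv_add2_left: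
  assumes "sin_cos_antideriv a b F c"
  shows "sin_cos_antideriv (a + 2) b
           (\<lambda>x. (real (a + 1) * F x - sin x ^ (a + 1) * cos x ^ (b + 1)) / real (a + b + 2))
           (real (a + 1) * c / real (a + b + 2))"
proof -
  define P where "P x = sin x ^ a * cos x ^ b" for x :: real
  define Q where "Q x = sin x ^ a * cos x ^ (b + 2)" for x :: real
  have F: "F \<in> trig_hom (a + b + 2)" and
    dF: "\<And>x. (F has_real_derivative P x - c) (at x)"
    using assms trig_hom_degree_add2 by (auto simp: sin_cos_antideriv_def P_def)
  have "((\<lambda>x. (real (a + 1) * F x - sin x ^ (a + 1) * cos x ^ (b + 1)) / real (a + b + 2))
      has_real_derivative (real (a + 1) * (P x - c) - (real (a + b + 2) * Q x - real (b + 1) * P x))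
        / real (a + b + 2)) (at x)" for x
    using has_real_derivative_sin_cos_power[of a b x] unfolding P_def[symmetric] Q_def[symmetric]
    by (intro DERIV_cdivide DERIV_diff DERIV_cmult dF)
  moreover have "(real (a + 1) * (P x - c) - (real (a + b + 2) * Q x - real (b + 1) * P x))
        / real (a + b + 2) = P x - Q x - real (a + 1) * c / real (a + b + 2)" for x
    by (simp add: field_simps)
  moreover have "P x - Q x = sin x ^ (a + 2) * cos x ^ b" for x
    by (simp only: P_def Q_def sin_power_add2_cos_power)
  moreover have "(\<lambda>x. (real (a + 1) * F x - sin x ^ (a + 1) * cos x ^ (b + 1)) / real (a + b + 2))
      \<in> trig_hom (a + 2 + b)"
    using F trig_hom.monom[of "a + 1" "b + 1"]
    by (auto intro!: trig_hom_divide trig_hom_diff trig_hom.scale)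
  ultimately show ?thesis
    using assms by (auto simp: sin_cos_antideriv_def)
qed

lemma sin_cos_antideriv_exists_cos_power_0: "\<exists>F c. sin_cos_antideriv a 0 F c"
proof (induction a rule: nat_induct2)
  case 0
  have "sin_cos_antideriv 0 0 (\<lambda>x. 0) 1"
    by (auto simp: sin_cos_antideriv_def intro: trig_hom.zero)
  then show ?case by blast
next
  case 1
  have "(\<lambda>x. - cos x) \<in> trig_hom 1"
    using trig_hom_diff[OF trig_hom.zero trig_hom.monom[of 0 1]] by simp
  then have "sin_cos_antideriv 1 0 (\<lambda>x. - cos x) 0"
    by (auto simp: sin_cos_antideriv_def intro!: derivative_eq_intros)
  then show ?case by blast
next
  case (step a)
  then obtain F c where "sin_cos_antideriv a 0 F c" by blast
  from sin_cos_antideriv_add2_left[OF this] show ?case by auto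
qed

lemma sin_cos_antideriv_cos_power_1:
  "sin_cos_antideriv a 1 (\<lambda>x. sin x ^ (a + 1) / real (a + 1)) 0"
  unfolding sin_cos_antideriv_def
proof (intro conjI allI impI)
  show "(\<lambda>x. sin x ^ (a + 1) / real (a + 1)) \<in> trig_hom (a + 1)"
    using trig_hom_divide[OF trig_hom.monom[of "a + 1" 0 "a + 1"], of "real (a + 1)"] by simp
  have "((\<lambda>x. sin x ^ (a + 1)) has_real_derivative real (a + 1) * (sin x ^ a * cos x)) (at x)" for x
    by (rule derivative_eq_intros refl)+ simp
  from DERIV_cdivide[OF this, of "real (a + 1)"]
  show "((\<lambda>x. sin x ^ (a + 1) / real (a + 1)) has_real_derivative sin x ^ a * cos x ^ 1 - 0) (at x)" for x
    by simp
qed simp_all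

lemma sin_cos_antideriv_exists: "\<exists>F c. sin_cos_antideriv a b F c"
proof (induction b rule: nat_induct2)
  case (step b)
  then obtain F c where "sin_cos_antideriv a b F c" by blast
  from sin_cos_antideriv_add2_right[OF this] show ?case by auto
qed (use sin_cos_antideriv_exists_cos_power_0 sin_cos_antideriv_cos_power_1 in auto)

lemma integral_sin_cos_power:
  assumes "sin_cos_antideriv a b F c" and "s \<le> t"
  shows "integral {s..t} (\<lambda>x. sin x ^ a * cos x ^ b) = F t - F s + c * (t - s)"
proof -
  have "((\<lambda>x. F x + c * x) has_real_derivative sin x ^ a * cos x ^ b) (at x)" for x
    using assms(1) unfolding sin_cos_antideriv_def
    by (auto intro!: derivative_eq_intros)
  then have "((\<lambda>x. sin x ^ a * cos x ^ b) has_integral (F t + c * t) - (F s + c * s)) {s..t}"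
    by (intro fundamental_theorem_of_calculus assms(2))
       (auto simp: has_real_derivative_iff_has_vector_derivative[symmetric] intro: has_field_derivative_at_within)
  then show ?thesis
    by (simp add: integral_unique algebra_simps)
qed

lemma integral_sin_cos_power_half_turns_odd:
  assumes "odd (a + b)"
  obtains F where "F \<in> trig_hom (a + b)"
    and "\<And>s. integral {s - pi..s} (\<lambda>x. sin x ^ a * cos x ^ b) = 2 * F s"
    and "\<And>s. integral {s..s + pi} (\<lambda>x. sin x ^ a * cos x ^ b) = - 2 * F s"
proof -
  obtain F c where F: "sin_cos_antideriv a b F c"
    using sin_cos_antideriv_exists by blast
  then have hom: "F \<in> trig_hom (a + b)" and "c = 0"
    using assms by (auto simp: sin_cos_antideriv_def)
  with assms have "F (s + pi) = - F s" "F (s - pi) = - F s" for s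
    using trig_hom_shift_pi[OF hom, of s] by simp_all
  with that hom \<open>c = 0\<close> show ?thesis
    using integral_sin_cos_power[OF F] by simp
qed

lemma integral_sin_cos_power_half_turns_even:
  assumes "even (a + b)"
  obtains c where "even a \<Longrightarrow> c > 0"
    and "\<And>s. integral {s - pi..s} (\<lambda>x. sin x ^ a * cos x ^ b) = c * pi"
    and "\<And>s. integral {s..s + pi} (\<lambda>x. sin x ^ a * cos x ^ b) = c * pi"
proof -
  obtain F c where F: "sin_cos_antideriv a b F c"
    using sin_cos_antideriv_exists by blast
  then have hom: "F \<in> trig_hom (a + b)" and pos: "even a \<Longrightarrow> c > 0"
    using assms by (auto simp: sin_cos_antideriv_def)
  with assms have "F (s + pi) = F s" "F (s - pi) = F s" for s
    using trig_hom_shift_pi[OF hom, of s] by simp_all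
  then show ?thesis
    using integral_sin_cos_power[OF F] by (intro that[of c] pos) simp_all
qed

lemma integral_sin_cos_power_exact:
  assumes "s \<le> t"
  shows "real a * integral {s..t} (\<lambda>x. sin x ^ (a - 1) * cos x ^ (b + 1))
       - real b * integral {s..t} (\<lambda>x. sin x ^ (a + 1) * cos x ^ (b - 1))
       = sin t ^ a * cos t ^ b - sin s ^ a * cos s ^ b"
proof -
  have "((\<lambda>x. sin x ^ a * cos x ^ b) has_real_derivative
      real a * (sin x ^ (a - 1) * cos x ^ (b + 1)) - real b * (sin x ^ (a + 1) * cos x ^ (b - 1))) (at x)"
    for x
    by (rule derivative_eq_intros refl)+ (cases a; cases b; simp add: algebra_simps)
  then have "((\<lambda>x. real a * (sin x ^ (a - 1) * cos x ^ (b + 1)) - real b * (sin x ^ (a + 1) * cos x ^ (b - 1)))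
      has_integral (sin t ^ a * cos t ^ b - sin s ^ a * cos s ^ b)) {s..t}"
    by (intro fundamental_theorem_of_calculus assms)
       (auto simp flip: has_real_derivative_iff_has_vector_derivative intro: has_field_derivative_at_within)
  moreover have "((\<lambda>x. real a * (sin x ^ (a - 1) * cos x ^ (b + 1)) - real b * (sin x ^ (a + 1) * cos x ^ (b - 1)))
      has_integral (real a * integral {s..t} (\<lambda>x. sin x ^ (a - 1) * cos x ^ (b + 1))
       - real b * integral {s..t} (\<lambda>x. sin x ^ (a + 1) * cos x ^ (b - 1)))) {s..t}"
    by (intro has_integral_diff has_integral_mult_right integrable_integral integrable_continuous_real
        continuous_intros)
  ultimately show ?thesis
    using has_integral_unique by blast
qed

section \<open>The Melnikov function on the circle\<close>

lemma vector_derivative_circ: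
  "vector_derivative (circ h) (at t) = (sqrt h * cos t, - (sqrt h * sin t))"
proof (rule vector_derivative_at)
  have "((\<lambda>\<theta>. (sqrt h * sin \<theta>, sqrt h * cos \<theta>)) has_vector_derivative
      (sqrt h * cos t, - (sqrt h * sin t))) (at t)"
    by (intro has_vector_derivative_Pair)
       (auto simp flip: has_real_derivative_iff_has_vector_derivative intro!: derivative_eq_intros)
  then show "(circ h has_vector_derivative (sqrt h * cos t, - (sqrt h * sin t))) (at t)"
    by (simp add: circ_def[abs_def])
qed

lemma line_int_circ:
  "line_int (poly2 n b) (poly2 n a) (circ h) s t =
   (\<Sum>i\<le>n. \<Sum>j\<le>n - i. sqrt h ^ (i + j + 1) *
      (b i j * integral {s..t} (\<lambda>x. sin x ^ i * cos x ^ (j + 1))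
     + a i j * integral {s..t} (\<lambda>x. sin x ^ (i + 1) * cos x ^ j)))"
proof -
  define r where "r = sqrt h"
  have term_eq: "b i j * (r * s) ^ i * (r * c) ^ j * (r * c) + a i j * (r * s) ^ i * (r * c) ^ j * (r * s)
     = r ^ (i + j + 1) * (b i j * (s ^ i * c ^ (j + 1)) + a i j * (s ^ (i + 1) * c ^ j))"
    for i j and s c :: real
    by (simp add: power_mult_distrib power_add algebra_simps)
  have "poly2 n b (fst (circ h x)) (snd (circ h x)) * fst (vector_derivative (circ h) (at x))
      - poly2 n a (fst (circ h x)) (snd (circ h x)) * snd (vector_derivative (circ h) (at x))
    = (\<Sum>i\<le>n. \<Sum>j\<le>n - i. b i j * (r * sin x) ^ i * (r * cos x) ^ j * (r * cos x)
        + a i j * (r * sin x) ^ i * (r * cos x) ^ j * (r * sin x))" for x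
    by (simp add: vector_derivative_circ poly2_def circ_def r_def sum_distrib_right sum.distrib)
  also have "\<dots> x = (\<Sum>i\<le>n. \<Sum>j\<le>n - i. r ^ (i + j + 1) *
        (b i j * (sin x ^ i * cos x ^ (j + 1)) + a i j * (sin x ^ (i + 1) * cos x ^ j)))" for x
    by (simp only: term_eq)
  moreover have "((\<lambda>x. \<Sum>i\<le>n. \<Sum>j\<le>n - i. r ^ (i + j + 1) *
        (b i j * (sin x ^ i * cos x ^ (j + 1)) + a i j * (sin x ^ (i + 1) * cos x ^ j)))
     has_integral (\<Sum>i\<le>n. \<Sum>j\<le>n - i. r ^ (i + j + 1) *
      (b i j * integral {s..t} (\<lambda>x. sin x ^ i * cos x ^ (j + 1))
     + a i j * integral {s..t} (\<lambda>x. sin x ^ (i + 1) * cos x ^ j)))) {s..t}"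
    by (intro has_integral_sum ballI finite_atMost has_integral_mult_right has_integral_add
        integrable_integral integrable_continuous_real continuous_intros)
  ultimately show ?thesis
    unfolding line_int_def r_def by (simp add: integral_unique)
qed

definition moment_plus :: "nat \<Rightarrow> real \<Rightarrow> nat \<Rightarrow> nat \<Rightarrow> real" where
  "moment_plus m h a b = integral {theta0 m h - pi..theta0 m h} (\<lambda>x. sin x ^ a * cos x ^ b)"

definition moment_minus :: "nat \<Rightarrow> real \<Rightarrow> nat \<Rightarrow> nat \<Rightarrow> real" where
  "moment_minus m h a b = integral {theta0 m h..theta0 m h + pi} (\<lambda>x. sin x ^ a * cos x ^ b)"

lemma melnikov_eq_moments:
  "melnikov m n ap bp am bm h =
   (\<Sum>i\<le>n. \<Sum>j\<le>n - i. sqrt h ^ (i + j + 1) *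
      (bp i j * moment_plus m h i (j + 1) + ap i j * moment_plus m h (i + 1) j
     + bm i j * moment_minus m h i (j + 1) + am i j * moment_minus m h (i + 1) j))"
  unfolding melnikov_def line_int_circ moment_plus_def moment_minus_def
  by (simp add: sum.distrib[symmetric] algebra_simps)

text \<open>An abbreviation, so that level m u is literally the term u ^ 2 + u ^ (2 * m) of the
  statement.\<close>

abbreviation level :: "nat \<Rightarrow> real \<Rightarrow> real" where
  "level m u \<equiv> u ^ 2 + u ^ (2 * m)"

lemma u_of_level:
  assumes "m \<ge> 1" and "u > 0"
  shows "u_of m (level m u) = u"
  unfolding u_of_def
proof (rule the_equality)
  fix v :: real
  assume v: "v > 0 \<and> v ^ 2 + v ^ (2 * m) = u ^ 2 + u ^ (2 * m)"
  have "strict_mono_on {0..} (\<lambda>x::real. x ^ 2 + x ^ (2 * m))"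
    using assms(1) by (auto simp: strict_mono_on_def intro!: add_strict_mono power_strict_mono)
  then show "v = u"
    using v assms(2) by (auto dest: strict_mono_on_eqD)
qed (use assms(2) in simp)

lemma circ_theta0_level:
  assumes "m \<ge> 1" and "u > 0"
  shows "circ (level m u) (theta0 m (level m u)) = (u, u ^ m)"
proof -
  define h where "h = level m u"
  define t where "t = u / u ^ m"
  have um: "u ^ m > 0" using assms(2) by simp
  have th: "theta0 m h = arctan t"
    unfolding theta0_def t_def h_def using u_of_level[OF assms] by simp
  have "1 + t ^ 2 = h / (u ^ m) ^ 2"
    unfolding t_def h_def using um assms(2) by (simp add: power_mult power_divide mult.commute add_divide_distrib)
  then have q: "sqrt (1 + t ^ 2) = sqrt h / u ^ m"
    using um by (simp add: real_sqrt_divide)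
  have "sqrt h > 0" unfolding h_def using assms(2) by (simp add: add_pos_nonneg)
  then have "sqrt h * sin (theta0 m h) = u" "sqrt h * cos (theta0 m h) = u ^ m"
    unfolding th sin_arctan cos_arctan q using um by (simp_all add: t_def field_simps)
  then show ?thesis
    unfolding circ_def h_def by simp
qed

lemma level_power_sin_cos_theta0:
  assumes "m \<ge> 1" and "u > 0"
  shows "sqrt (level m u) ^ (i + j) * (sin (theta0 m (level m u)) ^ i * cos (theta0 m (level m u)) ^ j)
    = u ^ (i + m * j)"
proof -
  define r \<theta> where "r = sqrt (level m u)" and "\<theta> = theta0 m (level m u)"
  have "r * sin \<theta> = u" and "r * cos \<theta> = u ^ m"
    using circ_theta0_level[OF assms] by (simp_all add: circ_def r_def \<theta>_def)
  have "r ^ (i + j) * (sin \<theta> ^ i * cos \<theta> ^ j) = (r * sin \<theta>) ^ i * (r * cos \<theta>) ^ j"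
    by (simp add: power_add power_mult_distrib)
  also have "\<dots> = u ^ (i + m * j)"
    by (simp add: \<open>r * sin \<theta> = u\<close> \<open>r * cos \<theta> = u ^ m\<close> power_add power_mult)
  finally show ?thesis
    unfolding r_def \<theta>_def .
qed

lemma sqrt_level_power_even:
  "sqrt (level m u) ^ (2 * l + 2) = level m u ^ (l + 1)"
proof -
  have "level m u \<ge> 0" by (simp add: power_mult)
  then show ?thesis
    by (simp add: power_mult flip: mult_Suc_right)
qed

lemma Lset_eq: "Lset n = {l. 2 * l + 1 \<le> n}"
proof -
  have "int l \<le> \<lfloor>(real n - 1) / 2\<rfloor> \<longleftrightarrow> 2 * l + 1 \<le> n" for l
    by (simp add: le_floor_iff field_simps flip: of_nat_le_iff) linarith
  then show ?thesis unfolding Lset_def by simp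
qed

lemma finite_Lset: "finite (Lset n)"
  unfolding Lset_eq by (rule finite_subset[of _ "{..n}"]) auto

lemma mixed_exponent_eq:
  fixes k p m :: nat
  assumes "k \<le> 2 * p" and "m \<ge> 1"
  shows "2 * p + (m - 1) * (k + 1) + 1 = (2 * p - k) + m * (k + 1)"
  using assms by (cases m) (auto simp: algebra_simps)

section \<open>Melnikov functions are combinations of the listed functions\<close>

locale pos_function_space =
  fixes S :: "(real \<Rightarrow> real) set"
  assumes zero_mem: "(\<lambda>u. 0) \<in> S"
    and add_mem: "f \<in> S \<Longrightarrow> g \<in> S \<Longrightarrow> (\<lambda>u. f u + g u) \<in> S"
    and scale_mem: "f \<in> S \<Longrightarrow> (\<lambda>u. c * f u) \<in> S"
    and cong_mem: "f \<in> S \<Longrightarrow> (\<And>u. u > 0 \<Longrightarrow> g u = f u) \<Longrightarrow> g \<in> S"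
begin

lemma sum_mem:
  assumes "finite A" and "\<And>x. x \<in> A \<Longrightarrow> f x \<in> S"
  shows "(\<lambda>u. \<Sum>x\<in>A. f x u) \<in> S"
  using assms by (induction A rule: finite_induct) (auto intro: zero_mem add_mem)

lemma lincomb_mem:
  assumes "finite A" and "\<And>x. x \<in> A \<Longrightarrow> f x \<in> S"
  shows "(\<lambda>u. \<Sum>x\<in>A. c x * f x u) \<in> S"
  using assms by (intro sum_mem scale_mem)

lemma diff_mem:
  "f \<in> S \<Longrightarrow> g \<in> S \<Longrightarrow> (\<lambda>u. f u - g u) \<in> S"
  using add_mem[of f "\<lambda>u. -1 * g u"] scale_mem[of g "-1"] by simp

end

definition comb_span :: "nat \<Rightarrow> nat \<Rightarrow> (real \<Rightarrow> real) set" where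
  "comb_span m n = {g. \<exists>cA cB cC. \<forall>u>0. g u = comb m n cA cB cC u}"

interpretation comb_span: pos_function_space "comb_span m n"
proof
  show "(\<lambda>u. 0) \<in> comb_span m n"
    unfolding comb_span_def by (auto intro!: exI[of _ "\<lambda>_. 0"] exI[of _ "\<lambda>_ _. 0"] simp: comb_def)
next
  fix f g assume "f \<in> comb_span m n" "g \<in> comb_span m n"
  then obtain a1 b1 c1 a2 b2 c2 where "\<forall>u>0. f u = comb m n a1 b1 c1 u" "\<forall>u>0. g u = comb m n a2 b2 c2 u"
    unfolding comb_span_def by blast
  then have "\<forall>u>0. f u + g u = comb m n (\<lambda>p. a1 p + a2 p) (\<lambda>p k. b1 p k + b2 p k) (\<lambda>l. c1 l + c2 l) u"
    by (simp add: comb_def sum.distrib algebra_simps)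
  then show "(\<lambda>u. f u + g u) \<in> comb_span m n"
    unfolding comb_span_def by blast
next
  fix f c assume "f \<in> comb_span m n"
  then obtain a b c' where "\<forall>u>0. f u = comb m n a b c' u"
    unfolding comb_span_def by blast
  then have "\<forall>u>0. c * f u = comb m n (\<lambda>p. c * a p) (\<lambda>p k. c * b p k) (\<lambda>l. c * c' l) u"
    by (simp add: comb_def sum_distrib_left algebra_simps)
  then show "(\<lambda>u. c * f u) \<in> comb_span m n"
    unfolding comb_span_def by blast
qed (auto simp: comb_span_def)

lemma comb_span_odd_power:
  assumes "p \<le> n div 2"
  shows "(\<lambda>u. u ^ (2 * p + 1)) \<in> comb_span m n"
proof -
  have "\<forall>u>0. u ^ (2 * p + 1) = comb m n (\<lambda>q. of_bool (q = p)) (\<lambda>_ _. 0) (\<lambda>_. 0) u"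
    using assms by (simp add: comb_def)
  then show ?thesis unfolding comb_span_def by blast
qed

lemma comb_span_mixed_power:
  assumes "p \<le> n div 2" and "k \<le> 2 * p"
  shows "(\<lambda>u. u ^ (2 * p + (m - 1) * (k + 1) + 1)) \<in> comb_span m n"
proof -
  have "\<forall>u>0. u ^ (2 * p + (m - 1) * (k + 1) + 1)
      = comb m n (\<lambda>_. 0) (\<lambda>q j. of_bool (q = p \<and> j = k)) (\<lambda>_. 0) u"
    using assms by (simp add: comb_def of_bool_conj mult.assoc flip: sum_distrib_left)
  then show ?thesis unfolding comb_span_def by blast
qed

lemma comb_span_level_power:
  assumes "l \<in> Lset n"
  shows "(\<lambda>u. level m u ^ (l + 1)) \<in> comb_span m n"
proof -
  have "\<forall>u>0. level m u ^ (l + 1) = comb m n (\<lambda>_. 0) (\<lambda>_ _. 0) (\<lambda>q. of_bool (q = l)) u"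
    using assms finite_Lset by (simp add: comb_def)
  then show ?thesis unfolding comb_span_def by blast
qed

lemma comb_span_monomial:
  assumes "odd (i + j)" and "i + j \<le> n + 1" and "m \<ge> 1"
  shows "(\<lambda>u. u ^ (i + m * j)) \<in> comb_span m n"
proof -
  obtain p where p: "i + j = 2 * p + 1"
    using assms(1) by (rule oddE)
  with assms(2) have "p \<le> n div 2"
    by simp
  show ?thesis
  proof (cases j)
    case 0
    then show ?thesis using comb_span_odd_power[OF \<open>p \<le> n div 2\<close>] p by simp
  next
    case (Suc k)
    then have "k \<le> 2 * p" and "i = 2 * p - k"
      using p by simp_all
    then have "i + m * j = 2 * p + (m - 1) * (k + 1) + 1"
      unfolding Suc Suc_eq_plus1 by (simp only: mixed_exponent_eq[OF _ assms(3)])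
    then show ?thesis
      using comb_span_mixed_power[OF \<open>p \<le> n div 2\<close> \<open>k \<le> 2 * p\<close>] by simp
  qed
qed

lemma comb_span_trig_hom_at_theta0:
  assumes "F \<in> trig_hom d" and "odd d" and "d \<le> n + 1" and "m \<ge> 1"
  shows "(\<lambda>u. sqrt (level m u) ^ d * F (theta0 m (level m u))) \<in> comb_span m n"
  using assms(1)
proof induction
  case zero
  then show ?case using comb_span.zero_mem by simp
next
  case (monom i j)
  show ?case
  proof (rule comb_span.cong_mem[OF comb_span_monomial])
    fix u :: real assume "u > 0"
    then show "sqrt (level m u) ^ d * (sin (theta0 m (level m u)) ^ i * cos (theta0 m (level m u)) ^ j)
        = u ^ (i + m * j)"
      using level_power_sin_cos_theta0[OF assms(4)] monom(1) by blast
  qed (use monom assms in simp_all)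
next
  case (add f g)
  then show ?case using comb_span.add_mem[OF add.IH] by (simp add: distrib_left)
next
  case (scale f c)
  then show ?case using comb_span.scale_mem[OF scale.IH, of c] by (simp add: algebra_simps)
qed

lemma comb_span_scaled_moments:
  assumes "1 \<le> a + b" and "a + b \<le> n + 1" and "m \<ge> 1"
  shows "(\<lambda>u. sqrt (level m u) ^ (a + b) * moment_plus m (level m u) a b) \<in> comb_span m n"
    and "(\<lambda>u. sqrt (level m u) ^ (a + b) * moment_minus m (level m u) a b) \<in> comb_span m n"
proof -
  have "(\<lambda>u. sqrt (level m u) ^ (a + b) * moment_plus m (level m u) a b) \<in> comb_span m n \<and>
        (\<lambda>u. sqrt (level m u) ^ (a + b) * moment_minus m (level m u) a b) \<in> comb_span m n"
  proof (cases "odd (a + b)")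
    case True
    then obtain F where F: "F \<in> trig_hom (a + b)"
      and "\<And>s. integral {s - pi..s} (\<lambda>x. sin x ^ a * cos x ^ b) = 2 * F s"
      and "\<And>s. integral {s..s + pi} (\<lambda>x. sin x ^ a * cos x ^ b) = - 2 * F s"
      by (rule integral_sin_cos_power_half_turns_odd) blast
    then have "moment_plus m h a b = 2 * F (theta0 m h)" "moment_minus m h a b = - 2 * F (theta0 m h)"
      for h by (simp_all add: moment_plus_def moment_minus_def)
    moreover note F_mem = comb_span_trig_hom_at_theta0[OF F True assms(2,3)]
    ultimately show ?thesis
      using comb_span.scale_mem[OF F_mem, of 2] comb_span.scale_mem[OF F_mem, of "-2"]
      by (simp add: algebra_simps)
  next
    case False
    then have "even (a + b)" by simp
    then obtain c where "\<And>s. integral {s - pi..s} (\<lambda>x. sin x ^ a * cos x ^ b) = c * pi"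
      and "\<And>s. integral {s..s + pi} (\<lambda>x. sin x ^ a * cos x ^ b) = c * pi"
      by (rule integral_sin_cos_power_half_turns_even) blast
    then have moments: "moment_plus m h a b = c * pi" "moment_minus m h a b = c * pi"
      for h by (simp_all add: moment_plus_def moment_minus_def)
    obtain l where l: "a + b = 2 * l + 2"
    proof
      show "a + b = 2 * ((a + b) div 2 - 1) + 2"
        using \<open>even (a + b)\<close> assms(1) by (elim evenE) auto
    qed
    with assms(2) have "l \<in> Lset n"
      by (simp add: Lset_eq)
    from comb_span.scale_mem[OF comb_span_level_power[OF this], of "c * pi"]
    show ?thesis
      unfolding l sqrt_level_power_even moments by (simp add: mult.commute)
  qed
  then show "(\<lambda>u. sqrt (level m u) ^ (a + b) * moment_plus m (level m u) a b) \<in> comb_span m n"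
    and "(\<lambda>u. sqrt (level m u) ^ (a + b) * moment_minus m (level m u) a b) \<in> comb_span m n"
    by blast+
qed

lemma melnikov_mem_comb_span:
  assumes "m \<ge> 1"
  shows "(\<lambda>u. melnikov m n ap bp am bm (level m u)) \<in> comb_span m n"
proof -
  have term_mem: "(\<lambda>u. sqrt (level m u) ^ (i + j + 1) *
      (bp i j * moment_plus m (level m u) i (j + 1) + ap i j * moment_plus m (level m u) (i + 1) j
     + bm i j * moment_minus m (level m u) i (j + 1) + am i j * moment_minus m (level m u) (i + 1) j))
    \<in> comb_span m n" if "i \<le> n" "j \<le> n - i" for i j
  proof -
    let ?r = "\<lambda>u. sqrt (level m u) ^ (i + j + 1)"
    have "1 \<le> i + (j + 1)" "i + (j + 1) \<le> n + 1" "1 \<le> i + 1 + j" "i + 1 + j \<le> n + 1"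
      using that by auto
    note left = comb_span_scaled_moments[OF this(1,2) assms] and
      right = comb_span_scaled_moments[OF this(3,4) assms]
    have "(\<lambda>u. ?r u * moment_plus m (level m u) i (j + 1)) \<in> comb_span m n"
      "(\<lambda>u. ?r u * moment_minus m (level m u) i (j + 1)) \<in> comb_span m n"
      "(\<lambda>u. ?r u * moment_plus m (level m u) (i + 1) j) \<in> comb_span m n"
      "(\<lambda>u. ?r u * moment_minus m (level m u) (i + 1) j) \<in> comb_span m n"
      using left right by (simp_all add: add.assoc add.left_commute[of 1])
    then show ?thesis
      by (simp only: distrib_left mult.left_commute[of "?r _"])
         (intro comb_span.add_mem comb_span.scale_mem)
  qed
  show ?thesis
    unfolding melnikov_eq_moments
    by (intro comb_span.sum_mem finite_atMost) (use term_mem in auto)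
qed

section \<open>Every combination of the listed functions is a Melnikov function\<close>

definition melnikov_range :: "nat \<Rightarrow> nat \<Rightarrow> (real \<Rightarrow> real) set" where
  "melnikov_range m n = {g. \<exists>ap bp am bm. \<forall>u>0. g u = melnikov m n ap bp am bm (level m u)}"

interpretation melnikov_range: pos_function_space "melnikov_range m n"
proof
  show "(\<lambda>u. 0) \<in> melnikov_range m n"
    unfolding melnikov_range_def by (auto intro!: exI[of _ "\<lambda>_ _. 0"] simp: melnikov_eq_moments)
next
  fix f g assume "f \<in> melnikov_range m n" "g \<in> melnikov_range m n"
  then obtain a1 b1 c1 d1 a2 b2 c2 d2 where
    "\<forall>u>0. f u = melnikov m n a1 b1 c1 d1 (level m u)"
    "\<forall>u>0. g u = melnikov m n a2 b2 c2 d2 (level m u)"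
    unfolding melnikov_range_def by blast
  moreover have "melnikov m n a1 b1 c1 d1 h + melnikov m n a2 b2 c2 d2 h =
      melnikov m n (\<lambda>i j. a1 i j + a2 i j) (\<lambda>i j. b1 i j + b2 i j)
        (\<lambda>i j. c1 i j + c2 i j) (\<lambda>i j. d1 i j + d2 i j) h" for h
    unfolding melnikov_eq_moments by (simp add: sum.distrib[symmetric] algebra_simps)
  ultimately show "(\<lambda>u. f u + g u) \<in> melnikov_range m n"
    unfolding melnikov_range_def by auto
next
  fix f c assume "f \<in> melnikov_range m n"
  then obtain a b c' d where "\<forall>u>0. f u = melnikov m n a b c' d (level m u)"
    unfolding melnikov_range_def by blast
  moreover have "c * melnikov m n a b c' d h =
      melnikov m n (\<lambda>i j. c * a i j) (\<lambda>i j. c * b i j) (\<lambda>i j. c * c' i j) (\<lambda>i j. c * d i j) h" for h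
    unfolding melnikov_eq_moments by (simp add: sum_distrib_left algebra_simps)
  ultimately show "(\<lambda>u. c * f u) \<in> melnikov_range m n"
    unfolding melnikov_range_def by auto
qed (auto simp: melnikov_range_def)

lemma melnikov_mem_melnikov_range: "(\<lambda>u. melnikov m n ap bp am bm (level m u)) \<in> melnikov_range m n"
  unfolding melnikov_range_def by blast

lemma sum_triangle_unit:
  assumes "i + j \<le> (n::nat)"
  shows "(\<Sum>i'\<le>n. \<Sum>j'\<le>n - i'. of_bool (i' = i \<and> j' = j) * f i' j') = (f i j :: real)"
  using assms by (simp add: of_bool_conj mult.assoc flip: sum_distrib_left)

lemma melnikov_range_unit_moments:
  assumes "i + j \<le> n"
  shows "(\<lambda>u. sqrt (level m u) ^ (i + j + 1) * moment_plus m (level m u) i (j + 1)) \<in> melnikov_range m n"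
    and "(\<lambda>u. sqrt (level m u) ^ (i + j + 1) * moment_plus m (level m u) (i + 1) j) \<in> melnikov_range m n"
    and "(\<lambda>u. sqrt (level m u) ^ (i + j + 1) * moment_minus m (level m u) i (j + 1)) \<in> melnikov_range m n"
    and "(\<lambda>u. sqrt (level m u) ^ (i + j + 1) * moment_minus m (level m u) (i + 1) j) \<in> melnikov_range m n"
proof -
  define e z where "e = (\<lambda>i' j'. of_bool (i' = i \<and> j' = j) :: real)" and "z = (\<lambda>(_::nat) (_::nat). 0 :: real)"
  have eqs: "melnikov m n z e z z h = sqrt h ^ (i + j + 1) * moment_plus m h i (j + 1)"
      "melnikov m n e z z z h = sqrt h ^ (i + j + 1) * moment_plus m h (i + 1) j"
      "melnikov m n z z z e h = sqrt h ^ (i + j + 1) * moment_minus m h i (j + 1)"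
      "melnikov m n z z e z h = sqrt h ^ (i + j + 1) * moment_minus m h (i + 1) j" for h
    unfolding melnikov_eq_moments e_def z_def
    by (simp_all only: mult_zero_left add_0_left add_0_right mult.left_commute[of _ "of_bool _"]
        sum_triangle_unit[OF assms])
  show "(\<lambda>u. sqrt (level m u) ^ (i + j + 1) * moment_plus m (level m u) i (j + 1)) \<in> melnikov_range m n"
    using melnikov_mem_melnikov_range[of m n z e z z] unfolding eqs(1) .
  show "(\<lambda>u. sqrt (level m u) ^ (i + j + 1) * moment_plus m (level m u) (i + 1) j) \<in> melnikov_range m n"
    using melnikov_mem_melnikov_range[of m n e z z z] unfolding eqs(2) .
  show "(\<lambda>u. sqrt (level m u) ^ (i + j + 1) * moment_minus m (level m u) i (j + 1)) \<in> melnikov_range m n"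
    using melnikov_mem_melnikov_range[of m n z z z e] unfolding eqs(3) .
  show "(\<lambda>u. sqrt (level m u) ^ (i + j + 1) * moment_minus m (level m u) (i + 1) j) \<in> melnikov_range m n"
    using melnikov_mem_melnikov_range[of m n z z e z] unfolding eqs(4) .
qed

lemma melnikov_range_scaled_moments:
  assumes "1 \<le> a + b" and "a + b \<le> n + 1"
  shows "(\<lambda>u. sqrt (level m u) ^ (a + b) * moment_plus m (level m u) a b) \<in> melnikov_range m n"
    and "(\<lambda>u. sqrt (level m u) ^ (a + b) * moment_minus m (level m u) a b) \<in> melnikov_range m n"
proof -
  have "(\<lambda>u. sqrt (level m u) ^ (a + b) * moment_plus m (level m u) a b) \<in> melnikov_range m n \<and>
        (\<lambda>u. sqrt (level m u) ^ (a + b) * moment_minus m (level m u) a b) \<in> melnikov_range m n"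
  proof (cases b)
    case 0
    with assms have "a - 1 + 0 \<le> n" and "a - 1 + 1 = a"
      by simp_all
    then show ?thesis
      using 0 melnikov_range_unit_moments(2,4)[of "a - 1" 0 n m] by simp
  next
    case (Suc j)
    with assms have "a + j \<le> n" by simp
    then show ?thesis
      using Suc melnikov_range_unit_moments(1,3)[of a j n m] by simp
  qed
  then show "(\<lambda>u. sqrt (level m u) ^ (a + b) * moment_plus m (level m u) a b) \<in> melnikov_range m n"
    and "(\<lambda>u. sqrt (level m u) ^ (a + b) * moment_minus m (level m u) a b) \<in> melnikov_range m n"
    by blast+
qed

text \<open>Here q^+ dx - p^+ dy is half the exact form d(x^a y^b), and since a + b is odd, x^a y^b takes
  opposite values at the two ends (u, u^m) and (-u, (-u)^m) of L_h^+.\<close>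

lemma melnikov_range_monomial:
  assumes "odd (a + b)" and "a + b \<le> n + 1" and "m \<ge> 1"
  shows "(\<lambda>u. u ^ (a + m * b)) \<in> melnikov_range m n"
proof -
  let ?r = "\<lambda>u. sqrt (level m u) ^ (a + b)"
  have left: "(\<lambda>u. real a * (?r u * moment_plus m (level m u) (a - 1) (b + 1))) \<in> melnikov_range m n"
  proof (cases "a = 0")
    case False
    then have "a - 1 + (b + 1) = a + b" by simp
    then show ?thesis
      using melnikov_range_scaled_moments(1)[of "a - 1" "b + 1" n m] assms(2)
      by (intro melnikov_range.scale_mem) simp
  qed (simp add: melnikov_range.zero_mem)
  have right: "(\<lambda>u. real b * (?r u * moment_plus m (level m u) (a + 1) (b - 1))) \<in> melnikov_range m n"
  proof (cases "b = 0")
    case False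
    then have "a + 1 + (b - 1) = a + b" by simp
    then show ?thesis
      using melnikov_range_scaled_moments(1)[of "a + 1" "b - 1" n m] assms(2)
      by (intro melnikov_range.scale_mem) simp
  qed (simp add: melnikov_range.zero_mem)
  show ?thesis
  proof (rule melnikov_range.cong_mem[OF melnikov_range.scale_mem[OF melnikov_range.diff_mem[OF left right]]])
    fix u :: real assume "u > 0"
    define \<theta> where "\<theta> = theta0 m (level m u)"
    have "real a * moment_plus m (level m u) (a - 1) (b + 1) - real b * moment_plus m (level m u) (a + 1) (b - 1)
        = sin \<theta> ^ a * cos \<theta> ^ b - sin (\<theta> - pi) ^ a * cos (\<theta> - pi) ^ b"
      unfolding moment_plus_def \<theta>_def[symmetric] by (rule integral_sin_cos_power_exact) simp
    also have "\<dots> = 2 * (sin \<theta> ^ a * cos \<theta> ^ b)"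
      using trig_hom_shift_pi(2)[OF trig_hom.monom[OF refl], of \<theta> a b] assms(1) by simp
    finally have "?r u * (real a * moment_plus m (level m u) (a - 1) (b + 1)
        - real b * moment_plus m (level m u) (a + 1) (b - 1)) = 2 * u ^ (a + m * b)"
      using level_power_sin_cos_theta0[OF assms(3) \<open>u > 0\<close>, of a b] unfolding \<theta>_def by simp
    then show "u ^ (a + m * b) = 1 / 2 * (real a * (?r u * moment_plus m (level m u) (a - 1) (b + 1))
        - real b * (?r u * moment_plus m (level m u) (a + 1) (b - 1)))"
      by (simp add: algebra_simps)
  qed
qed

lemma melnikov_range_level_power:
  assumes "l \<in> Lset n"
  shows "(\<lambda>u. level m u ^ (l + 1)) \<in> melnikov_range m n"
proof -
  obtain c where "c > 0"
    and "\<And>s. integral {s - pi..s} (\<lambda>x. sin x ^ (2 * l + 2) * cos x ^ 0) = c * pi"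
    and "\<And>s. integral {s..s + pi} (\<lambda>x. sin x ^ (2 * l + 2) * cos x ^ 0) = c * pi"
    by (rule integral_sin_cos_power_half_turns_even[of "2 * l + 2" 0]) auto
  then have moments: "moment_plus m h (2 * l + 2) 0 = c * pi" "moment_minus m h (2 * l + 2) 0 = c * pi"
    for h by (simp_all add: moment_plus_def moment_minus_def)
  have "1 \<le> 2 * l + 2" and "2 * l + 2 \<le> n + 1"
    using assms by (simp_all add: Lset_eq)
  note scaled = melnikov_range_scaled_moments[of "2 * l + 2" 0 n m,
      unfolded add_0_right sqrt_level_power_even moments, OF this]
  have "(\<lambda>u. 1 / (2 * c * pi) * (level m u ^ (l + 1) * (c * pi) + level m u ^ (l + 1) * (c * pi)))
      \<in> melnikov_range m n"
    by (intro melnikov_range.scale_mem melnikov_range.add_mem scaled)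
  then show ?thesis
    by (rule melnikov_range.cong_mem) (use \<open>c > 0\<close> in simp)
qed

lemma comb_mem_melnikov_range:
  assumes "m \<ge> 1"
  shows "(\<lambda>u. comb m n cA cB cC u) \<in> melnikov_range m n"
proof -
  have odd_power: "(\<lambda>u. u ^ (2 * p + 1)) \<in> melnikov_range m n" if "p \<le> n div 2" for p
    using melnikov_range_monomial[of "2 * p + 1" 0 n m] that assms by simp
  have mixed_power: "(\<lambda>u. u ^ (2 * p + (m - 1) * (k + 1) + 1)) \<in> melnikov_range m n"
    if "p \<le> n div 2" and "k \<le> 2 * p" for p k
  proof -
    have "odd (2 * p - k + (k + 1))" and "2 * p - k + (k + 1) \<le> n + 1"
      using that by auto
    from melnikov_range_monomial[OF this assms]
    show ?thesis
      unfolding mixed_exponent_eq[OF that(2) assms] .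
  qed
  show ?thesis
    unfolding comb_def
    by (intro melnikov_range.add_mem melnikov_range.lincomb_mem melnikov_range.sum_mem finite_atMost
        finite_Lset odd_power mixed_power melnikov_range_level_power) auto
qed

section \<open>Linear independence\<close>

lemma poly_odd_even_eq_0:
  fixes P E :: "real poly"
  assumes odd: "\<And>x. poly P (- x) = - poly P x" and even: "\<And>x. poly E (- x) = poly E x"
    and zero: "\<And>x. x > 0 \<Longrightarrow> poly P x + poly E x = 0"
  shows "P = 0" and "E = 0"
proof -
  have "P + E = 0"
  proof (rule ccontr)
    assume "P + E \<noteq> 0"
    then have "finite {x. poly (P + E) x = 0}"
      by (rule poly_roots_finite)
    moreover have "{0<..} \<subseteq> {x. poly (P + E) x = 0}"
      using zero by auto
    ultimately show False
      using infinite_Ioi finite_subset by blast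
  qed
  then have sum_0: "poly P x + poly E x = 0" for x
    by (metis poly_0 poly_add)
  have "poly P x = 0" and "poly E x = 0" for x
    using sum_0[of x] sum_0[of "- x"] odd[of x] even[of x] by linarith+
  then show "P = 0" and "E = 0"
    by (simp_all add: poly_eq_poly_eq_iff[symmetric] fun_eq_iff)
qed

definition comb_odd_poly :: "nat \<Rightarrow> nat \<Rightarrow> (nat \<Rightarrow> real) \<Rightarrow> (nat \<Rightarrow> nat \<Rightarrow> real) \<Rightarrow> real poly" where
  "comb_odd_poly m n cA cB = (\<Sum>p\<le>n div 2. monom (cA p) (2 * p + 1))
     + (\<Sum>p\<le>n div 2. \<Sum>k\<le>2 * p. monom (cB p k) (2 * p + (m - 1) * (k + 1) + 1))"

definition comb_even_poly :: "nat \<Rightarrow> (nat \<Rightarrow> real) \<Rightarrow> real poly" where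
  "comb_even_poly n cC = (\<Sum>l\<in>Lset n. monom (cC l) (l + 1))"

definition level_poly :: "nat \<Rightarrow> real poly" where
  "level_poly m = monom 1 2 + monom 1 (2 * m)"

lemma comb_eq_poly:
  "comb m n cA cB cC u = poly (comb_odd_poly m n cA cB) u + poly (comb_even_poly n cC \<circ>\<^sub>p level_poly m) u"
  by (simp add: comb_def comb_odd_poly_def comb_even_poly_def level_poly_def poly_pcompose
      poly_sum poly_monom)

lemma poly_comb_odd_poly_minus:
  assumes "odd m"
  shows "poly (comb_odd_poly m n cA cB) (- x) = - poly (comb_odd_poly m n cA cB) x"
proof -
  have "odd (2 * p + (m - 1) * (k + 1) + 1)" for p k
    using assms by simp
  then show ?thesis
    by (simp add: comb_odd_poly_def poly_sum poly_monom sum_negf[symmetric] algebra_simps)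
qed

lemma degree_level_poly: "degree (level_poly m) \<ge> 2"
  by (rule le_degree) (simp add: level_poly_def coeff_monom)

lemma add_mult_eq_add_multD:
  fixes a b a' b' m :: nat
  assumes "a < m" and "a' < m" and "a + m * b = a' + m * b'"
  shows "a = a'" and "b = b'"
proof -
  from assms(3) have "(a + m * b) mod m = (a' + m * b') mod m" "(a + m * b) div m = (a' + m * b') div m"
    by simp_all
  with assms(1,2) show "a = a'" and "b = b'"
    by simp_all
qed

lemma coeff_comb_odd_poly:
  "coeff (comb_odd_poly m n cA cB) e = (\<Sum>p\<le>n div 2. if 2 * p + 1 = e then cA p else 0)
     + (\<Sum>p\<le>n div 2. \<Sum>k\<le>2 * p. if 2 * p + (m - 1) * (k + 1) + 1 = e then cB p k else 0)"
  by (simp add: comb_odd_poly_def coeff_sum coeff_monom)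

lemma coeff_comb_odd_poly_odd_power:
  assumes "n < m - 1" and "p \<le> n div 2"
  shows "coeff (comb_odd_poly m n cA cB) (2 * p + 1) = cA p"
proof -
  have "2 * p' + (m - 1) * (k + 1) + 1 \<noteq> 2 * p + 1" for p' k
  proof -
    have "m - 1 \<le> (m - 1) * (k + 1)" by simp
    then show ?thesis using assms by linarith
  qed
  then show ?thesis
    using assms(2) by (simp add: coeff_comb_odd_poly)
qed

lemma coeff_comb_odd_poly_mixed_power:
  assumes "n < m - 1" and "p \<le> n div 2" and "k \<le> 2 * p"
  shows "coeff (comb_odd_poly m n cA cB) (2 * p + (m - 1) * (k + 1) + 1) = cB p k"
proof -
  let ?e = "2 * p + (m - 1) * (k + 1) + 1"
  have "(\<Sum>p'\<le>n div 2. if 2 * p' + 1 = ?e then cA p' else 0) = 0"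
  proof (intro sum.neutral ballI)
    fix p' assume "p' \<in> {..n div 2}"
    moreover have "m - 1 \<le> (m - 1) * (k + 1)" by simp
    ultimately show "(if 2 * p' + 1 = ?e then cA p' else 0) = 0"
      using assms by auto
  qed
  moreover have "(\<Sum>p'\<le>n div 2. \<Sum>k'\<le>2 * p'. if 2 * p' + (m - 1) * (k' + 1) + 1 = ?e then cB p' k' else 0)
      = (\<Sum>p'\<le>n div 2. \<Sum>k'\<le>2 * p'. of_bool (p' = p \<and> k' = k) * cB p' k')"
  proof (intro sum.cong refl)
    \<comment> \<open>the exponents are distinct: read (2p - k) + m (k + 1) in base m\<close>
    fix p' k' assume "p' \<in> {..n div 2}" "k' \<in> {..2 * p'}"
    then have "k' \<le> 2 * p'" "2 * p' - k' < m" "2 * p - k < m" "m \<ge> 1"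
      using assms by auto
    then have "2 * p' + (m - 1) * (k' + 1) + 1 = ?e \<longleftrightarrow> (2 * p' - k') + m * (k' + 1) = (2 * p - k) + m * (k + 1)"
      using assms(3) by (simp only: mixed_exponent_eq)
    also have "\<dots> \<longleftrightarrow> p' = p \<and> k' = k"
      using add_mult_eq_add_multD[of "2 * p' - k'" m "2 * p - k" "k' + 1" "k + 1"]
        \<open>k' \<le> 2 * p'\<close> \<open>2 * p' - k' < m\<close> \<open>2 * p - k < m\<close> assms(3) by auto
    finally have "2 * p' + (m - 1) * (k' + 1) + 1 = ?e \<longleftrightarrow> p' = p \<and> k' = k" .
    then show "(if 2 * p' + (m - 1) * (k' + 1) + 1 = ?e then cB p' k' else 0)
        = of_bool (p' = p \<and> k' = k) * cB p' k'"
      by simp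
  qed
  ultimately show ?thesis
    using assms(2,3) by (simp add: coeff_comb_odd_poly of_bool_conj mult.assoc flip: sum_distrib_left)
qed

lemma coeff_comb_even_poly:
  "l \<in> Lset n \<Longrightarrow> coeff (comb_even_poly n cC) (l + 1) = cC l"
  by (simp add: comb_even_poly_def coeff_sum coeff_monom finite_Lset)

lemma comb_coeffs_eq_0:
  assumes "odd m" and "n < m - 1" and zero: "\<And>u. u > 0 \<Longrightarrow> comb m n cA cB cC u = 0"
  shows "(\<forall>p\<le>n div 2. cA p = 0) \<and> (\<forall>p\<le>n div 2. \<forall>k\<le>2 * p. cB p k = 0) \<and> (\<forall>l\<in>Lset n. cC l = 0)"
proof -
  have even: "poly (comb_even_poly n cC \<circ>\<^sub>p level_poly m) (- x)
      = poly (comb_even_poly n cC \<circ>\<^sub>p level_poly m) x" for x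
    by (simp add: poly_pcompose level_poly_def poly_monom power_mult)
  note poly_odd_even_eq_0[OF poly_comb_odd_poly_minus[OF assms(1)] even zero[unfolded comb_eq_poly]]
  moreover have "degree (level_poly m) > 0"
    using degree_level_poly[of m] by simp
  ultimately have "comb_odd_poly m n cA cB = 0" and "comb_even_poly n cC = 0"
    using pcompose_eq_0 by blast+
  then show ?thesis
    using coeff_comb_odd_poly_odd_power[OF assms(2)] coeff_comb_odd_poly_mixed_power[OF assms(2)]
      coeff_comb_even_poly by (metis coeff_0)
qed

theorem lemma3p5:
  fixes k m n :: nat
  assumes "m = 2 * k + 1" and "n < m - 1"
  shows "(\<forall>ap bp am bm. \<exists>cA cB cC. \<forall>u>0.
            melnikov m n ap bp am bm (u ^ 2 + u ^ (2 * m)) = comb m n cA cB cC u)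
       \<and> (\<forall>cA cB cC. (\<forall>u>0. comb m n cA cB cC u = 0) \<longrightarrow>
            (\<forall>p\<le>n div 2. cA p = 0) \<and> (\<forall>p\<le>n div 2. \<forall>j\<le>2 * p. cB p j = 0)
            \<and> (\<forall>l\<in>Lset n. cC l = 0))
       \<and> (\<forall>cA cB cC. \<exists>ap bp am bm. \<forall>u>0.
            melnikov m n ap bp am bm (u ^ 2 + u ^ (2 * m)) = comb m n cA cB cC u)"
proof -
  from assms(1) have "m \<ge> 1" and "odd m"
    by simp_all
  show ?thesis
  proof (intro conjI)
    show "\<forall>ap bp am bm. \<exists>cA cB cC. \<forall>u>0.
        melnikov m n ap bp am bm (level m u) = comb m n cA cB cC u"
      using melnikov_mem_comb_span[OF \<open>m \<ge> 1\<close>] by (simp add: comb_span_def)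
    show "\<forall>cA cB cC. (\<forall>u>0. comb m n cA cB cC u = 0) \<longrightarrow>
        (\<forall>p\<le>n div 2. cA p = 0) \<and> (\<forall>p\<le>n div 2. \<forall>j\<le>2 * p. cB p j = 0) \<and> (\<forall>l\<in>Lset n. cC l = 0)"
      using comb_coeffs_eq_0[OF \<open>odd m\<close> assms(2)] by blast
    show "\<forall>cA cB cC. \<exists>ap bp am bm. \<forall>u>0.
        melnikov m n ap bp am bm (level m u) = comb m n cA cB cC u"
      using comb_mem_melnikov_range[OF \<open>m \<ge> 1\<close>] by (simp add: melnikov_range_def) metis
  qed
qed

end
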